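(* Let $n,m,p\in\mathbb{N}$ with $m\ge p$, $A\in\mathbb{R}^{n\times n}$, $B\in\mathbb{R}^{n\times m}$, $C\in\mathbb{R}^{p\times n}$, and let $f:\mathbb{R}\times\mathbb{R}^n\times\mathbb{R}^m\to\mathbb{R}^n$ be continuous and bounded. Assume: (P1) $L\in\mathcal{C}^\infty(\mathbb{R}\to\mathbb{R}^{m\times m})$ is such that $L,\dot L,\ldots,L^{(n)}$ are bounded and there is $q\in\mathbb{N}$ with $\operatorname{rk} BL(t)=q\ge p$ for all $t\in\mathbb{R}$; (P2) there is $r\in\mathbb{N}$ such that $CA^kBL(t)=0$ for all $t\in\mathbb{R}$ and $CA^kf(t,x,u)=0$ for all $(t,x,u)$, for $k=0,\ldots,r-2$, and $\Gamma:=CA^{r-1}B$ satisfies $\operatorname{rk}\Gamma L(t)=p$ for all $t\in\mathbb{R}$. Let $\mathcal{B}(t)$, $\mathcal{C}$ and $U(t)$ be as in the context. If there exists $\alpha>0$ such that $$\det\Big(\mathcal{C}\mathcal{B}(t)\big(\mathcal{C}\mathcal{B}(t)\big)^\top\Big)\ge\alpha\quad\text{for all }t\in\mathbb{R},$$ then $U$ is a Lyapunov transformation. The converse implication is false in general: there exist data $(A,B,C,f,L)$ satisfying (P1) and (P2) for which $U$ is a Lyapunov transformation but no such $\alpha>0$ exists.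
   Context: $M^\dagger$ denotes the Moore–Penrose pseudoinverse. For a matrix function $M$, $(\tfrac{d}{dt}-A)(M(t)):=\dot M(t)-AM(t)$, applied iteratively for powers. Define $\mathcal{B}(t):=\big[BL(t),(\tfrac{d}{dt}-A)(BL(t)),\ldots,(\tfrac{d}{dt}-A)^{r-1}(BL(t))\big]\in\mathbb{R}^{n\times rm}$; $\mathcal{C}:=[C^\top,(CA)^\top,\ldots,(CA^{r-1})^\top]^\top\in\mathbb{R}^{rp\times n}$; $\rho:=\operatorname{rk}\mathcal{C}$; $V\in\mathbb{R}^{n\times(n-\rho)}$ with $\operatorname{im}V=\ker\mathcal{C}$; $\mathcal{N}(t):=V^\dagger[I_n-\mathcal{B}(t)(\mathcal{C}\mathcal{B}(t))^\dagger\mathcal{C}]$; $U(t):=\begin{bmatrix}\mathcal{C}\\ \mathcal{N}(t)\end{bmatrix}$ (under (P1),(P2) this is a square invertible matrix). A map $M\in\mathcal{C}^1(\mathbb{R}\to\mathbf{Gl}_n(\mathbb{R}))$ is called a Lyapunov transformation if $M$, $M^{-1}$ and $\dot M$ are bounded on $\mathbb{R}$. *)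

theory Defs
  imports "HOL-Analysis.Analysis" "Jordan_Normal_Form.DL_Rank" "Jordan_Normal_Form.Determinant"
begin

definition mrank :: "real mat \<Rightarrow> nat" where
  "mrank M = vec_space.rank (dim_row M) M"

definition pinv :: "real mat \<Rightarrow> real mat" where
  "pinv M = (THE X. X \<in> carrier_mat (dim_col M) (dim_row M) \<and>
      M * X * M = M \<and> X * M * X = X \<and>
      transpose_mat (M * X) = M * X \<and> transpose_mat (X * M) = X * M)"

definition mderiv :: "(real \<Rightarrow> real mat) \<Rightarrow> real \<Rightarrow> real mat" where
  "mderiv M t = mat (dim_row (M t)) (dim_col (M t)) (\<lambda>(i,j). deriv (\<lambda>s. M s $$ (i,j)) t)"

definition mderiv_n :: "nat \<Rightarrow> (real \<Rightarrow> real mat) \<Rightarrow> real \<Rightarrow> real mat" where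
  "mderiv_n k M t = mat (dim_row (M t)) (dim_col (M t)) (\<lambda>(i,j). (deriv ^^ k) (\<lambda>s. M s $$ (i,j)) t)"

definition DA :: "real mat \<Rightarrow> (real \<Rightarrow> real mat) \<Rightarrow> real \<Rightarrow> real mat" where
  "DA A M = (\<lambda>t. mderiv M t - A * M t)"

definition smooth_mat_fun :: "nat \<Rightarrow> nat \<Rightarrow> (real \<Rightarrow> real mat) \<Rightarrow> bool" where
  "smooth_mat_fun a b M \<longleftrightarrow> (\<forall>t. M t \<in> carrier_mat a b) \<and>
     (\<forall>k i j t. i < a \<longrightarrow> j < b \<longrightarrow> ((deriv ^^ k) (\<lambda>s. M s $$ (i,j))) differentiable (at t))"

definition bounded_mat_fun :: "(real \<Rightarrow> real mat) \<Rightarrow> bool" where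
  "bounded_mat_fun M \<longleftrightarrow> (\<exists>K. \<forall>t i j. i < dim_row (M t) \<longrightarrow> j < dim_col (M t) \<longrightarrow> \<bar>M t $$ (i,j)\<bar> \<le> K)"

definition lyapunov_transformation :: "nat \<Rightarrow> (real \<Rightarrow> real mat) \<Rightarrow> bool" where
  "lyapunov_transformation n M \<longleftrightarrow>
     (\<forall>t. M t \<in> carrier_mat n n \<and> invertible_mat (M t)) \<and>
     (\<forall>i<n. \<forall>j<n. (\<forall>t. (\<lambda>s. M s $$ (i,j)) differentiable (at t)) \<and>
                  continuous_on UNIV (deriv (\<lambda>s. M s $$ (i,j)))) \<and>
     bounded_mat_fun M \<and>
     (\<exists>K. \<forall>t. \<exists>Mi \<in> carrier_mat n n. M t * Mi = 1\<^sub>m n \<and> Mi * M t = 1\<^sub>m n \<and>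
              (\<forall>i<n. \<forall>j<n. \<bar>Mi $$ (i,j)\<bar> \<le> K)) \<and>
     bounded_mat_fun (mderiv M)"

text \<open>f : R x R^n x R^m -> R^n continuous (w.r.t. the l1 distance, equivalent to the
  Euclidean one) and bounded.\<close>
definition vdist1 :: "real vec \<Rightarrow> real vec \<Rightarrow> real" where
  "vdist1 x y = (\<Sum>i<dim_vec x. \<bar>x $ i - y $ i\<bar>)"

definition cont_bounded_rhs :: "nat \<Rightarrow> nat \<Rightarrow> (real \<Rightarrow> real vec \<Rightarrow> real vec \<Rightarrow> real vec) \<Rightarrow> bool" where
  "cont_bounded_rhs n m f \<longleftrightarrow>
     (\<forall>t. \<forall>x\<in>carrier_vec n. \<forall>u\<in>carrier_vec m. f t x u \<in> carrier_vec n) \<and>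
     (\<exists>K. \<forall>t. \<forall>x\<in>carrier_vec n. \<forall>u\<in>carrier_vec m. \<forall>i<n. \<bar>f t x u $ i\<bar> \<le> K) \<and>
     (\<forall>t. \<forall>x\<in>carrier_vec n. \<forall>u\<in>carrier_vec m. \<forall>\<epsilon>>0. \<exists>\<delta>>0.
        \<forall>t'. \<forall>x'\<in>carrier_vec n. \<forall>u'\<in>carrier_vec m.
          \<bar>t' - t\<bar> + vdist1 x' x + vdist1 u' u < \<delta> \<longrightarrow> vdist1 (f t' x' u') (f t x u) < \<epsilon>)"

definition P1 :: "nat \<Rightarrow> nat \<Rightarrow> nat \<Rightarrow> real mat \<Rightarrow> (real \<Rightarrow> real mat) \<Rightarrow> bool" where
  "P1 n m p B L \<longleftrightarrow> smooth_mat_fun m m L \<and>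
     (\<forall>k\<le>n. bounded_mat_fun (mderiv_n k L)) \<and>
     (\<exists>q::nat. q \<ge> p \<and> (\<forall>t. mrank (B * L t) = q))"

definition P2 :: "nat \<Rightarrow> nat \<Rightarrow> nat \<Rightarrow> real mat \<Rightarrow> real mat \<Rightarrow> real mat
    \<Rightarrow> (real \<Rightarrow> real vec \<Rightarrow> real vec \<Rightarrow> real vec) \<Rightarrow> (real \<Rightarrow> real mat) \<Rightarrow> nat \<Rightarrow> bool" where
  "P2 n m p A B C f L r \<longleftrightarrow>
     (\<forall>k. k + 2 \<le> r \<longrightarrow>
        (\<forall>t. C * A ^\<^sub>m k * B * L t = 0\<^sub>m p m) \<and>
        (\<forall>t. \<forall>x\<in>carrier_vec n. \<forall>u\<in>carrier_vec m. C * A ^\<^sub>m k *\<^sub>v f t x u = 0\<^sub>v p)) \<and>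
     (\<forall>t. mrank (C * A ^\<^sub>m (r - 1) * B * L t) = p)"

text \<open>calB(t) = [BL, (d/dt-A)(BL), ..., (d/dt-A)^(r-1)(BL)] in R^(n x rm).\<close>
definition calB :: "nat \<Rightarrow> nat \<Rightarrow> real mat \<Rightarrow> real mat \<Rightarrow> (real \<Rightarrow> real mat) \<Rightarrow> nat \<Rightarrow> real \<Rightarrow> real mat" where
  "calB n m A B L r t = mat n (r * m)
     (\<lambda>(i,j). ((DA A ^^ (j div m)) (\<lambda>s. B * L s) t) $$ (i, j mod m))"

text \<open>calC = [C; CA; ...; CA^(r-1)] in R^(rp x n).\<close>
definition calC :: "nat \<Rightarrow> nat \<Rightarrow> real mat \<Rightarrow> real mat \<Rightarrow> nat \<Rightarrow> real mat" where
  "calC n p A C r = mat (r * p) n (\<lambda>(i,j). (C * A ^\<^sub>m (i div p)) $$ (i mod p, j))"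

definition kernel_basis :: "nat \<Rightarrow> real mat \<Rightarrow> real mat \<Rightarrow> bool" where
  "kernel_basis n CC V \<longleftrightarrow> V \<in> carrier_mat n (n - mrank CC) \<and>
     {V *\<^sub>v x | x. x \<in> carrier_vec (n - mrank CC)} = {y \<in> carrier_vec n. CC *\<^sub>v y = 0\<^sub>v (dim_row CC)}"

definition calN :: "nat \<Rightarrow> real mat \<Rightarrow> real mat \<Rightarrow> (real \<Rightarrow> real mat) \<Rightarrow> real \<Rightarrow> real mat" where
  "calN n V CC BB t = pinv V * (1\<^sub>m n - BB t * pinv (CC * BB t) * CC)"

text \<open>U(t) = [calC; calN(t)] (vertical stacking).\<close>
definition calU :: "nat \<Rightarrow> real mat \<Rightarrow> real mat \<Rightarrow> (real \<Rightarrow> real mat) \<Rightarrow> real \<Rightarrow> real mat" where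
  "calU n V CC BB t = mat (dim_row CC + (n - mrank CC)) n
     (\<lambda>(i,j). if i < dim_row CC then CC $$ (i,j) else calN n V CC BB t $$ (i - dim_row CC, j))"


definition data_hyps :: "nat \<Rightarrow> nat \<Rightarrow> nat \<Rightarrow> real mat \<Rightarrow> real mat \<Rightarrow> real mat
    \<Rightarrow> (real \<Rightarrow> real vec \<Rightarrow> real vec \<Rightarrow> real vec) \<Rightarrow> (real \<Rightarrow> real mat) \<Rightarrow> nat \<Rightarrow> bool" where
  "data_hyps n m p A B C f L r \<longleftrightarrow> m \<ge> p \<and>
     A \<in> carrier_mat n n \<and> B \<in> carrier_mat n m \<and> C \<in> carrier_mat p n \<and>
     cont_bounded_rhs n m f \<and> P1 n m p B L \<and> P2 n m p A B C f L r"

definition det_cond :: "nat \<Rightarrow> nat \<Rightarrow> nat \<Rightarrow> real mat \<Rightarrow> real mat \<Rightarrow> real mat \<Rightarrow> (real \<Rightarrow> real mat) \<Rightarrow> nat \<Rightarrow> bool" where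
  "det_cond n m p A B C L r \<longleftrightarrow> (\<exists>\<alpha>>0. \<forall>t.
     det (calC n p A C r * calB n m A B L r t * transpose_mat (calC n p A C r * calB n m A B L r t)) \<ge> \<alpha>)"

end

theory Submission
  imports Defs
begin

text \<open>
  Write \<open>CC\<close> for \<open>[C; CA; ...; CA^(r-1)]\<close> and \<open>BB(t)\<close> for \<open>[BL, (d/dt - A)(BL), ...]\<close>.
  The determinant bound makes \<open>G = CC BB (CC BB)^T\<close> uniformly invertible, so
  \<open>pinv (CC BB) = (CC BB)^T adj G / det G\<close> and \<open>K = BB pinv (CC BB)\<close> is a right inverse
  of \<open>CC\<close>. The entries of \<open>BB\<close> only involve derivatives of \<open>L\<close> of order \<open>\<le> r \<le> n\<close>, so
  they, and hence the entries of \<open>K\<close>, are \<open>C^1\<close> and bounded with bounded derivative. A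
  matrix \<open>V\<close> whose columns span \<open>ker CC\<close> is left invertible, and then
  \<open>U = [CC; pinv V (1 - K CC)]\<close> has the explicit inverse \<open>[K V]\<close>, whose entries are again
  bounded \<open>C^1\<close> functions with bounded derivative: this is the Lyapunov property.

  For the converse take \<open>n = m = p = r = 1\<close>, \<open>A = 0\<close>, \<open>B = C = 1\<close> and
  \<open>L(t) = 1 / (1 + e^t)\<close>. Then \<open>U = 1\<close>, while \<open>det (CB (CB)^T) = L(t)^2\<close> tends to \<open>0\<close>.
\<close>

section \<open>Bounded \<open>C^1\<close> functions\<close>

lemma bounded_times_comp:
  fixes f g :: "'a \<Rightarrow> 'b::real_normed_algebra"
  assumes "bounded (f ` S)" "bounded (g ` S)"
  shows "bounded ((\<lambda>x. f x * g x) ` S)"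
proof -
  obtain a b where "\<forall>x\<in>S. norm (f x) \<le> a" "\<forall>x\<in>S. norm (g x) \<le> b"
    using assms by (auto simp: bounded_iff)
  then have "norm (f x * g x) \<le> a * b" if "x \<in> S" for x
    using that by (meson norm_ge_zero norm_mult_ineq mult_mono' order_trans)
  then show ?thesis by (auto simp: bounded_iff)
qed

lemma real_differentiable_iff_field_differentiable:
  "(f :: real \<Rightarrow> real) differentiable (at t) \<longleftrightarrow> f field_differentiable (at t)"
  using DERIV_deriv_iff_real_differentiable DERIV_deriv_iff_field_differentiable by blast

lemma differentiable_imp_continuous_on_UNIV:
  "(\<And>t. (f :: real \<Rightarrow> real) differentiable (at t)) \<Longrightarrow> continuous_on UNIV f"
  by (meson continuous_at_imp_continuous_on differentiable_imp_continuous_within)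

definition bounded_C1 :: "(real \<Rightarrow> real) \<Rightarrow> bool" where
  "bounded_C1 f \<longleftrightarrow> (\<forall>t. f differentiable (at t)) \<and> continuous_on UNIV (deriv f) \<and>
     bounded (range f) \<and> bounded (range (deriv f))"

lemma bounded_C1_const: "bounded_C1 (\<lambda>t. c)"
  by (simp add: bounded_C1_def)

lemma bounded_C1_add:
  assumes "bounded_C1 f" "bounded_C1 g"
  shows "bounded_C1 (\<lambda>t. f t + g t)"
proof -
  have "deriv (\<lambda>t. f t + g t) = (\<lambda>t. deriv f t + deriv g t)"
    using assms by (auto simp: bounded_C1_def real_differentiable_iff_field_differentiable)
  with assms show ?thesis
    by (auto simp: bounded_C1_def intro: bounded_plus_comp continuous_on_add)
qed

lemma bounded_C1_mult:
  assumes "bounded_C1 f" "bounded_C1 g"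
  shows "bounded_C1 (\<lambda>t. f t * g t)"
proof -
  have "deriv (\<lambda>t. f t * g t) = (\<lambda>t. f t * deriv g t + deriv f t * g t)"
    using assms by (auto simp: bounded_C1_def real_differentiable_iff_field_differentiable)
  with assms show ?thesis
    by (auto simp: bounded_C1_def differentiable_imp_continuous_on_UNIV
        intro!: bounded_plus_comp bounded_times_comp continuous_on_add continuous_on_mult)
qed

lemma bounded_C1_uminus: "bounded_C1 f \<Longrightarrow> bounded_C1 (\<lambda>t. - f t)"
  using bounded_C1_mult[OF bounded_C1_const, of f "-1"] by simp

lemma bounded_C1_diff: "bounded_C1 f \<Longrightarrow> bounded_C1 g \<Longrightarrow> bounded_C1 (\<lambda>t. f t - g t)"
  using bounded_C1_add[OF _ bounded_C1_uminus, of f g] by simp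

lemma bounded_C1_sum:
  "(\<And>x. x \<in> S \<Longrightarrow> bounded_C1 (f x)) \<Longrightarrow> bounded_C1 (\<lambda>t. \<Sum>x\<in>S. f x t)"
  by (induction S rule: infinite_finite_induct) (auto intro: bounded_C1_add bounded_C1_const)

lemma bounded_C1_prod:
  "(\<And>x. x \<in> S \<Longrightarrow> bounded_C1 (f x)) \<Longrightarrow> bounded_C1 (\<lambda>t. \<Prod>x\<in>S. f x t)"
  by (induction S rule: infinite_finite_induct) (auto intro: bounded_C1_mult bounded_C1_const)

lemma bounded_C1_inverse:
  assumes f: "bounded_C1 f" and lower: "\<And>t. a \<le> f t" and "0 < a"
  shows "bounded_C1 (\<lambda>t. inverse (f t))"
proof -
  have nz: "f t \<noteq> 0" for t
    using lower[of t] \<open>0 < a\<close> by auto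
  have diff: "f differentiable (at t)" for t
    using f by (simp add: bounded_C1_def)
  have inv_bounded: "bounded (range (\<lambda>t. inverse (f t)))"
  proof -
    have "\<bar>inverse (f t)\<bar> \<le> inverse a" for t
      using lower[of t] \<open>0 < a\<close> by (simp add: le_imp_inverse_le)
    then show ?thesis by (auto simp: bounded_real)
  qed
  have "deriv (\<lambda>t. inverse (f t)) = (\<lambda>t. - deriv f t * (inverse (f t) * inverse (f t)))"
    using diff nz by (auto simp: real_differentiable_iff_field_differentiable
        power2_eq_square divide_inverse)
  moreover have "continuous_on UNIV (\<lambda>t. inverse (f t))"
    using diff nz by (intro continuous_on_inverse differentiable_imp_continuous_on_UNIV) auto
  ultimately show ?thesis
    using f diff nz inv_bounded unfolding bounded_C1_def
    by (auto intro!: bounded_times_comp continuous_on_mult continuous_on_minus differentiable_inverse)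
qed

section \<open>Smooth functions with bounded derivatives\<close>

definition smooth_bounded_upto :: "nat \<Rightarrow> (real \<Rightarrow> real) \<Rightarrow> bool" where
  "smooth_bounded_upto d f \<longleftrightarrow> (\<forall>k t. (deriv ^^ k) f differentiable (at t)) \<and>
     (\<forall>k\<le>d. bounded (range ((deriv ^^ k) f)))"

lemma higher_deriv_linear_combination:
  fixes f g :: "real \<Rightarrow> real"
  assumes "\<And>k t. (deriv ^^ k) f differentiable (at t)" "\<And>k t. (deriv ^^ k) g differentiable (at t)"
  shows "(deriv ^^ k) (\<lambda>t. a * f t + b * g t) = (\<lambda>t. a * (deriv ^^ k) f t + b * (deriv ^^ k) g t)"
proof (induction k)
  case (Suc k)
  then show ?case
    using assms by (auto simp: real_differentiable_iff_field_differentiable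
        field_differentiable_mult)
qed simp

lemma smooth_bounded_upto_linear_combination:
  assumes f: "smooth_bounded_upto d f" and g: "smooth_bounded_upto d g"
  shows "smooth_bounded_upto d (\<lambda>t. a * f t + b * g t)"
proof -
  have "(deriv ^^ k) f differentiable (at t)" "(deriv ^^ k) g differentiable (at t)" for k t
    using f g by (simp_all add: smooth_bounded_upto_def)
  note higher_derivs = this higher_deriv_linear_combination[OF this]
  with f g show ?thesis
    unfolding smooth_bounded_upto_def higher_derivs(3)
    by (auto intro!: bounded_plus_comp bounded_times_comp differentiable_add differentiable_mult)
qed

lemma smooth_bounded_upto_zero: "smooth_bounded_upto d (\<lambda>t. 0)"
proof -
  have "(deriv ^^ k) (\<lambda>t. 0 :: real) = (\<lambda>t. 0)" for k
    by (induction k) auto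
  then show ?thesis by (simp add: smooth_bounded_upto_def)
qed

lemma smooth_bounded_upto_diff:
  "smooth_bounded_upto d f \<Longrightarrow> smooth_bounded_upto d g \<Longrightarrow> smooth_bounded_upto d (\<lambda>t. f t - g t)"
  using smooth_bounded_upto_linear_combination[of d f g 1 "-1"] by simp

lemma smooth_bounded_upto_cmult:
  "smooth_bounded_upto d f \<Longrightarrow> smooth_bounded_upto d (\<lambda>t. c * f t)"
  using smooth_bounded_upto_linear_combination[of d f f c 0] by simp

lemma smooth_bounded_upto_sum:
  "(\<And>x. x \<in> S \<Longrightarrow> smooth_bounded_upto d (f x)) \<Longrightarrow> smooth_bounded_upto d (\<lambda>t. \<Sum>x\<in>S. f x t)"
  using smooth_bounded_upto_linear_combination[of d _ _ 1 1]
  by (induction S rule: infinite_finite_induct) (auto intro: smooth_bounded_upto_zero)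

lemma smooth_bounded_upto_mono: "smooth_bounded_upto d f \<Longrightarrow> d' \<le> d \<Longrightarrow> smooth_bounded_upto d' f"
  unfolding smooth_bounded_upto_def by auto

lemma smooth_bounded_upto_deriv:
  assumes "smooth_bounded_upto (Suc d) f"
  shows "smooth_bounded_upto d (deriv f)"
proof -
  have "(deriv ^^ k) (deriv f) = (deriv ^^ Suc k) f" for k
    by (simp add: funpow_Suc_right del: funpow.simps)
  then show ?thesis
    using assms by (auto simp: smooth_bounded_upto_def simp del: funpow.simps)
qed

lemma smooth_bounded_upto_imp_bounded_C1:
  assumes "smooth_bounded_upto (Suc d) f"
  shows "bounded_C1 f"
proof -
  have "(deriv ^^ 0) f differentiable (at t)" "(deriv ^^ 1) f differentiable (at t)" for t
    using assms unfolding smooth_bounded_upto_def by blast+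
  moreover have "bounded (range ((deriv ^^ 0) f))" "bounded (range ((deriv ^^ 1) f))"
    using assms unfolding smooth_bounded_upto_def by auto
  ultimately show ?thesis
    by (auto simp: bounded_C1_def differentiable_imp_continuous_on_UNIV)
qed

definition smooth_bounded_mat :: "nat \<Rightarrow> nat \<Rightarrow> nat \<Rightarrow> (real \<Rightarrow> real mat) \<Rightarrow> bool" where
  "smooth_bounded_mat d a b M \<longleftrightarrow> (\<forall>t. M t \<in> carrier_mat a b) \<and>
     (\<forall>i<a. \<forall>j<b. smooth_bounded_upto d (\<lambda>t. M t $$ (i,j)))"

lemma P1_imp_smooth_bounded_mat:
  assumes "P1 n m p B L"
  shows "smooth_bounded_mat n m m L"
proof -
  have L: "smooth_mat_fun m m L" and bounded: "\<And>k. k \<le> n \<Longrightarrow> bounded_mat_fun (mderiv_n k L)"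
    using assms by (auto simp: P1_def)
  have carrier: "L t \<in> carrier_mat m m" for t
    using L by (simp add: smooth_mat_fun_def)
  have "bounded (range ((deriv ^^ k) (\<lambda>s. L s $$ (i,j))))" if "k \<le> n" "i < m" "j < m" for k i j
  proof -
    obtain K where K: "\<forall>t i j. i < dim_row (mderiv_n k L t) \<longrightarrow> j < dim_col (mderiv_n k L t) \<longrightarrow>
        \<bar>mderiv_n k L t $$ (i,j)\<bar> \<le> K"
      using bounded[OF \<open>k \<le> n\<close>] unfolding bounded_mat_fun_def by blast
    have "\<bar>(deriv ^^ k) (\<lambda>s. L s $$ (i,j)) t\<bar> \<le> K" for t
      using K[rule_format, of i t j] carrier[of t] that by (simp add: mderiv_n_def)
    then show ?thesis
      by (auto simp: bounded_real)
  qed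
  with L carrier show ?thesis
    by (auto simp: smooth_bounded_mat_def smooth_bounded_upto_def smooth_mat_fun_def)
qed

lemma smooth_bounded_mat_const_mult:
  assumes X: "X \<in> carrier_mat a b" and M: "smooth_bounded_mat d b c M"
  shows "smooth_bounded_mat d a c (\<lambda>t. X * M t)"
proof -
  have carrier: "M t \<in> carrier_mat b c" for t
    using M by (simp add: smooth_bounded_mat_def)
  have "(X * M t) $$ (i,j) = (\<Sum>l<b. X $$ (i,l) * M t $$ (l,j))" if "i < a" "j < c" for i j t
    using X carrier[of t] that by (auto simp: scalar_prod_def atLeast0LessThan)
  with X M carrier show ?thesis
    by (auto simp: smooth_bounded_mat_def intro!: smooth_bounded_upto_sum smooth_bounded_upto_cmult)
qed

lemma smooth_bounded_mat_DA:
  assumes A: "A \<in> carrier_mat a a" and M: "smooth_bounded_mat (Suc d) a b M"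
  shows "smooth_bounded_mat d a b (DA A M)"
proof -
  have carrier: "M t \<in> carrier_mat a b" for t
    using M by (simp add: smooth_bounded_mat_def)
  have DA_carrier: "DA A M t \<in> carrier_mat a b" for t
    using A carrier[of t] by (auto simp: DA_def mderiv_def)
  have entry: "DA A M t $$ (i,j) = deriv (\<lambda>s. M s $$ (i,j)) t - (\<Sum>l<a. A $$ (i,l) * M t $$ (l,j))"
    if "i < a" "j < b" for i j t
    using A carrier[of t] that by (auto simp: DA_def mderiv_def scalar_prod_def atLeast0LessThan)
  have "smooth_bounded_upto d (\<lambda>t. deriv (\<lambda>s. M s $$ (i,j)) t - (\<Sum>l<a. A $$ (i,l) * M t $$ (l,j)))"
    if "i < a" "j < b" for i j
  proof (intro smooth_bounded_upto_diff smooth_bounded_upto_sum smooth_bounded_upto_cmult)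
    show "smooth_bounded_upto d (deriv (\<lambda>s. M s $$ (i,j)))"
      using M that by (simp add: smooth_bounded_mat_def smooth_bounded_upto_deriv)
    show "smooth_bounded_upto d (\<lambda>t. M t $$ (l,j))" if "l \<in> {..<a}" for l
      using M that \<open>j < b\<close> smooth_bounded_upto_mono[of "Suc d" _ d]
      by (simp add: smooth_bounded_mat_def)
  qed
  with DA_carrier entry show ?thesis
    by (simp add: smooth_bounded_mat_def)
qed

lemma smooth_bounded_mat_DA_power:
  assumes A: "A \<in> carrier_mat a a" and M: "smooth_bounded_mat d a b M"
  shows "k \<le> d \<Longrightarrow> smooth_bounded_mat (d - k) a b ((DA A ^^ k) M)"
proof (induction k)
  case (Suc k)
  then have "smooth_bounded_mat (Suc (d - Suc k)) a b ((DA A ^^ k) M)"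
    by (simp add: Suc_diff_Suc)
  then show ?case
    using smooth_bounded_mat_DA[OF A] by simp
qed (use M in simp)

section \<open>Matrix functions with bounded \<open>C^1\<close> entries\<close>

definition bounded_C1_mat :: "nat \<Rightarrow> nat \<Rightarrow> (real \<Rightarrow> real mat) \<Rightarrow> bool" where
  "bounded_C1_mat a b M \<longleftrightarrow> (\<forall>t. M t \<in> carrier_mat a b) \<and>
     (\<forall>i<a. \<forall>j<b. bounded_C1 (\<lambda>t. M t $$ (i,j)))"

lemma bounded_C1_matD:
  assumes "bounded_C1_mat a b M"
  shows "M t \<in> carrier_mat a b" "dim_row (M t) = a" "dim_col (M t) = b"
    and "i < a \<Longrightarrow> j < b \<Longrightarrow> bounded_C1 (\<lambda>t. M t $$ (i,j))"
  using assms by (auto simp: bounded_C1_mat_def)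

lemma bounded_C1_matI:
  assumes "\<And>t. dim_row (M t) = a" "\<And>t. dim_col (M t) = b"
    and "\<And>i j. i < a \<Longrightarrow> j < b \<Longrightarrow> bounded_C1 (\<lambda>t. M t $$ (i,j))"
  shows "bounded_C1_mat a b M"
  using assms by (auto simp: bounded_C1_mat_def)

lemma bounded_C1_mat_const: "X \<in> carrier_mat a b \<Longrightarrow> bounded_C1_mat a b (\<lambda>t. X)"
  by (simp add: bounded_C1_mat_def bounded_C1_const)

lemma bounded_C1_mat_no_cols: "(\<And>t. M t \<in> carrier_mat a 0) \<Longrightarrow> bounded_C1_mat a 0 M"
  by (simp add: bounded_C1_mat_def)

lemma bounded_C1_mat_mult:
  assumes M: "bounded_C1_mat a b M" and N: "bounded_C1_mat b c N"
  shows "bounded_C1_mat a c (\<lambda>t. M t * N t)"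
proof (rule bounded_C1_matI)
  fix i j assume "i < a" "j < c"
  then have "(M t * N t) $$ (i,j) = (\<Sum>l<b. M t $$ (i,l) * N t $$ (l,j))" for t
    using bounded_C1_matD[OF M] bounded_C1_matD[OF N] by (simp add: scalar_prod_def atLeast0LessThan)
  then show "bounded_C1 (\<lambda>t. (M t * N t) $$ (i,j))"
    using \<open>i < a\<close> \<open>j < c\<close>
    by (auto intro!: bounded_C1_sum bounded_C1_mult bounded_C1_matD(4)[OF M] bounded_C1_matD(4)[OF N])
qed (simp_all add: bounded_C1_matD[OF M] bounded_C1_matD[OF N])

lemma bounded_C1_mat_diff:
  assumes M: "bounded_C1_mat a b M" and N: "bounded_C1_mat a b N"
  shows "bounded_C1_mat a b (\<lambda>t. M t - N t)"
  by (rule bounded_C1_matI) (simp_all add: bounded_C1_matD[OF M] bounded_C1_matD[OF N] bounded_C1_diff)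

lemma bounded_C1_mat_transpose:
  assumes M: "bounded_C1_mat a b M"
  shows "bounded_C1_mat b a (\<lambda>t. transpose_mat (M t))"
  by (rule bounded_C1_matI) (simp_all add: bounded_C1_matD[OF M])

lemma bounded_C1_mat_smult:
  assumes g: "bounded_C1 g" and M: "bounded_C1_mat a b M"
  shows "bounded_C1_mat a b (\<lambda>t. g t \<cdot>\<^sub>m M t)"
  by (rule bounded_C1_matI) (simp_all add: bounded_C1_matD[OF M] bounded_C1_mult g)

lemma bounded_C1_det:
  assumes M: "bounded_C1_mat a a M"
  shows "bounded_C1 (\<lambda>t. det (M t))"
proof -
  have "det (M t) = (\<Sum>p | p permutes {0..<a}. of_int (sign p) * (\<Prod>i<a. M t $$ (i, p i)))" for t
    using bounded_C1_matD(1)[OF M, of t] by (auto simp: det_def atLeast0LessThan)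
  moreover have "p i < a" if "p permutes {0..<a}" "i < a" for p i
    using that by (simp add: permutes_in_image)
  ultimately show ?thesis
    by (auto intro!: bounded_C1_sum bounded_C1_mult bounded_C1_const bounded_C1_prod
        bounded_C1_matD(4)[OF M])
qed

lemma bounded_C1_mat_delete:
  assumes M: "bounded_C1_mat a a M" and "i < a" "j < a"
  shows "bounded_C1_mat (a - 1) (a - 1) (\<lambda>t. mat_delete (M t) i j)"
proof (rule bounded_C1_matI)
  fix k l assume "k < a - 1" "l < a - 1"
  then have "insert_index i k < a" "insert_index j l < a"
    by (auto simp: insert_index_def)
  with \<open>k < a - 1\<close> \<open>l < a - 1\<close> show "bounded_C1 (\<lambda>t. mat_delete (M t) i j $$ (k,l))"
    by (simp add: mat_delete_def bounded_C1_matD[OF M])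
qed (simp_all add: mat_delete_def bounded_C1_matD[OF M])

lemma bounded_C1_mat_adj:
  assumes M: "bounded_C1_mat a a M"
  shows "bounded_C1_mat a a (\<lambda>t. adj_mat (M t))"
proof (rule bounded_C1_matI)
  fix i j assume "i < a" "j < a"
  then have "adj_mat (M t) $$ (i,j) = (-1)^(j+i) * det (mat_delete (M t) j i)" for t
    by (simp add: adj_mat_def cofactor_def bounded_C1_matD[OF M])
  then show "bounded_C1 (\<lambda>t. adj_mat (M t) $$ (i,j))"
    using \<open>i < a\<close> \<open>j < a\<close>
    by (auto intro!: bounded_C1_mult bounded_C1_const bounded_C1_det bounded_C1_mat_delete[OF M])
qed (simp_all add: adj_mat_def bounded_C1_matD[OF M])

lemma bounded_C1_mat_adj_inverse:
  assumes G: "bounded_C1_mat a a G" and "\<And>t. \<alpha> \<le> det (G t)" and "0 < \<alpha>"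
  shows "bounded_C1_mat a a (\<lambda>t. inverse (det (G t)) \<cdot>\<^sub>m adj_mat (G t))"
  using assms by (intro bounded_C1_mat_smult bounded_C1_inverse bounded_C1_det bounded_C1_mat_adj)

lemma bounded_mat_funI:
  assumes carrier: "\<And>t. M t \<in> carrier_mat a b"
    and entries: "\<And>i j. i < a \<Longrightarrow> j < b \<Longrightarrow> bounded (range (\<lambda>t. M t $$ (i,j)))"
  shows "bounded_mat_fun M"
proof -
  have "bounded (\<Union>(i,j)\<in>{..<a} \<times> {..<b}. range (\<lambda>t. M t $$ (i,j)))"
    using entries by (intro bounded_Union) auto
  then obtain K where "\<forall>i<a. \<forall>j<b. \<forall>t. \<bar>M t $$ (i,j)\<bar> \<le> K"
    by (auto simp: bounded_real)
  then show ?thesis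
    using carrier unfolding bounded_mat_fun_def by (metis carrier_matD)
qed

lemma bounded_C1_mat_bounded:
  assumes M: "bounded_C1_mat a b M"
  shows "bounded_mat_fun M" and "bounded_mat_fun (mderiv M)"
proof -
  have C1: "bounded_C1 (\<lambda>t. M t $$ (i,j))" if "i < a" "j < b" for i j
    using bounded_C1_matD(4)[OF M that] .
  show "bounded_mat_fun M"
    using C1 by (intro bounded_mat_funI[OF bounded_C1_matD(1)[OF M]]) (simp add: bounded_C1_def)
  show "bounded_mat_fun (mderiv M)"
    using C1 by (intro bounded_mat_funI[of _ a b]) (auto simp: bounded_C1_def mderiv_def bounded_C1_matD[OF M])
qed

lemma calB_bounded_C1:
  assumes A: "A \<in> carrier_mat n n" and B: "B \<in> carrier_mat n m" and P1: "P1 n m p B L"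
    and "r \<le> n"
  shows "bounded_C1_mat n (r * m) (calB n m A B L r)"
proof (rule bounded_C1_matI)
  fix i j assume i: "i < n" and j: "j < r * m"
  then have "0 < m" by (cases m) auto
  with j have block: "j div m < r" and col: "j mod m < m"
    by (auto simp: div_less_iff_less_mult mult.commute)
  have "smooth_bounded_mat (n - j div m) n m ((DA A ^^ (j div m)) (\<lambda>s. B * L s))"
    using block \<open>r \<le> n\<close> by (intro smooth_bounded_mat_DA_power[OF A]
        smooth_bounded_mat_const_mult[OF B P1_imp_smooth_bounded_mat[OF P1]]) simp
  moreover have "n - j div m = Suc (n - Suc (j div m))"
    using block \<open>r \<le> n\<close> by simp
  ultimately show "bounded_C1 (\<lambda>t. calB n m A B L r t $$ (i,j))"
    using i j col by (auto simp: calB_def smooth_bounded_mat_def intro: smooth_bounded_upto_imp_bounded_C1)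
qed (simp_all add: calB_def)

lemma lyapunov_transformationI:
  assumes U: "bounded_C1_mat n n U" and W: "bounded_C1_mat n n W"
    and right_inv: "\<And>t. U t * W t = 1\<^sub>m n"
  shows "lyapunov_transformation n U"
proof -
  have left_inv: "W t * U t = 1\<^sub>m n" for t
    using mat_mult_left_right_inverse[OF bounded_C1_matD(1)[OF U] bounded_C1_matD(1)[OF W] right_inv] .
  then have "invertible_mat (U t)" for t
    using right_inv[of t] bounded_C1_matD[OF U] bounded_C1_matD[OF W]
    unfolding invertible_mat_def inverts_mat_def by auto
  moreover obtain K where "\<forall>t i j. i < n \<longrightarrow> j < n \<longrightarrow> \<bar>W t $$ (i,j)\<bar> \<le> K"
    using bounded_C1_mat_bounded(1)[OF W] bounded_C1_matD[OF W] unfolding bounded_mat_fun_def by auto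
  ultimately show ?thesis
    using U right_inv left_inv bounded_C1_matD[OF W] bounded_C1_mat_bounded[OF U]
    unfolding lyapunov_transformation_def bounded_C1_mat_def bounded_C1_def by blast
qed

section \<open>The Moore-Penrose pseudoinverse\<close>

definition is_pinv :: "real mat \<Rightarrow> real mat \<Rightarrow> bool" where
  "is_pinv M X \<longleftrightarrow> X \<in> carrier_mat (dim_col M) (dim_row M) \<and>
     M * X * M = M \<and> X * M * X = X \<and>
     transpose_mat (M * X) = M * X \<and> transpose_mat (X * M) = X * M"

lemma is_pinv_unique:
  assumes X: "is_pinv M X" and Y: "is_pinv M Y"
  shows "X = Y"
proof -
  define a b where "a = dim_row M" and "b = dim_col M"
  have M: "M \<in> carrier_mat a b" and Xc: "X \<in> carrier_mat b a" and Yc: "Y \<in> carrier_mat b a"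
    using X Y by (auto simp: is_pinv_def a_def b_def)
  have x1: "M * X * M = M" and x2: "X * M * X = X" and x3: "transpose_mat (M * X) = M * X"
    and x4: "transpose_mat (X * M) = X * M"
    and y1: "M * Y * M = M" and y2: "Y * M * Y = Y" and y3: "transpose_mat (M * Y) = M * Y"
    and y4: "transpose_mat (Y * M) = Y * M"
    using X Y by (auto simp: is_pinv_def)
  have MT: "transpose_mat M \<in> carrier_mat b a" and XT: "transpose_mat X \<in> carrier_mat a b"
    and YT: "transpose_mat Y \<in> carrier_mat a b" and MY: "M * Y \<in> carrier_mat a a"
    and XM: "X * M \<in> carrier_mat b b"
    using M Xc Yc by auto
  have XT_MT: "transpose_mat X * transpose_mat M = M * X"
    using x3 transpose_mult[OF M Xc] by simp
  have MT_YT: "transpose_mat M * transpose_mat Y = Y * M"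
    using y4 transpose_mult[OF Yc M] by simp
  have MT_MY: "transpose_mat M * (M * Y) = transpose_mat M"
    using transpose_mult[OF MY M] y1 y3 by simp
  have XM_MT: "(X * M) * transpose_mat M = transpose_mat M"
    using transpose_mult[OF M XM] x1 x4 assoc_mult_mat[OF M Xc M] by simp
  have "X = X * (M * X)"
    using x2 assoc_mult_mat[OF Xc M Xc] by simp
  also have "\<dots> = X * (transpose_mat X * (transpose_mat M * (M * Y)))"
    unfolding MT_MY XT_MT ..
  also have "\<dots> = X * ((M * X) * (M * Y))"
    unfolding assoc_mult_mat[OF XT MT MY, symmetric] XT_MT ..
  also have "\<dots> = X * M * Y"
    using x2 assoc_mult_mat[OF Xc M Xc] assoc_mult_mat[OF Xc mult_carrier_mat[OF M Xc] MY]
      assoc_mult_mat[OF Xc M Yc] by simp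
  also have "\<dots> = (X * M) * ((Y * M) * Y)"
    unfolding y2 ..
  also have "\<dots> = (X * M) * transpose_mat M * transpose_mat Y * Y"
    unfolding MT_YT[symmetric] assoc_mult_mat[OF XM MT YT]
      assoc_mult_mat[OF XM mult_carrier_mat[OF MT YT] Yc] ..
  also have "\<dots> = Y"
    unfolding XM_MT MT_YT y2 ..
  finally show ?thesis .
qed

lemma pinv_eqI: "is_pinv M X \<Longrightarrow> pinv M = X"
  unfolding pinv_def is_pinv_def[symmetric] using is_pinv_unique by blast

lemma is_pinv_transpose:
  assumes "is_pinv M X"
  shows "is_pinv (transpose_mat M) (transpose_mat X)"
proof -
  define a b where "a = dim_row M" and "b = dim_col M"
  have M: "M \<in> carrier_mat a b" and X: "X \<in> carrier_mat b a"
    using assms by (auto simp: is_pinv_def a_def b_def)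
  have "transpose_mat M * transpose_mat X = transpose_mat (X * M)"
    and "transpose_mat X * transpose_mat M = transpose_mat (M * X)"
    using transpose_mult[OF X M] transpose_mult[OF M X] by simp_all
  moreover have "transpose_mat M * transpose_mat X * transpose_mat M = transpose_mat (M * X * M)"
    and "transpose_mat X * transpose_mat M * transpose_mat X = transpose_mat (X * M * X)"
    using M X by (simp_all add: transpose_mult[OF M mult_carrier_mat[OF X M]]
        transpose_mult[OF X mult_carrier_mat[OF M X]] transpose_mult[OF X M] transpose_mult[OF M X])
  ultimately show ?thesis
    using assms M X by (auto simp: is_pinv_def)
qed

lemma adj_mat_inverse:
  fixes G :: "'a::field mat"
  assumes G: "G \<in> carrier_mat a a" and det: "det G \<noteq> 0"
  shows "G * (inverse (det G) \<cdot>\<^sub>m adj_mat G) = 1\<^sub>m a"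
proof -
  have "inverse (det G) \<cdot>\<^sub>m (det G \<cdot>\<^sub>m 1\<^sub>m a) = 1\<^sub>m a"
    using det by (intro eq_matI) auto
  then show ?thesis
    using adj_mat[OF G] by (simp add: mult_smult_distrib[OF G])
qed

lemma transpose_inverse_of_symmetric:
  fixes G Gi :: "'a::comm_ring_1 mat"
  assumes G: "G \<in> carrier_mat a a" and Gi: "Gi \<in> carrier_mat a a"
    and symmetric: "transpose_mat G = G" and inverse: "G * Gi = 1\<^sub>m a"
  shows "transpose_mat Gi = Gi"
proof -
  have "transpose_mat Gi = transpose_mat Gi * (G * Gi)"
    using inverse right_mult_one_mat[of "transpose_mat Gi" a a] Gi by simp
  also have "\<dots> = transpose_mat (G * Gi) * Gi"
    using symmetric G Gi by (simp add: transpose_mult)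
  finally show ?thesis
    using inverse Gi by simp
qed

lemma is_pinv_full_row_rank:
  assumes X: "X \<in> carrier_mat a k" and det: "det (X * transpose_mat X) \<noteq> 0"
  defines "G \<equiv> X * transpose_mat X"
  shows "is_pinv X (transpose_mat X * (inverse (det G) \<cdot>\<^sub>m adj_mat G))"
proof -
  define Gi where "Gi = inverse (det G) \<cdot>\<^sub>m adj_mat G"
  have G: "G \<in> carrier_mat a a" and Gi: "Gi \<in> carrier_mat a a"
    using X adj_mat(1)[of G a] by (simp_all add: G_def Gi_def)
  have G_Gi: "G * Gi = 1\<^sub>m a"
    using adj_mat_inverse[OF G] det by (simp add: G_def Gi_def)
  have Gi_symmetric: "transpose_mat Gi = Gi"
    using transpose_inverse_of_symmetric[OF G Gi _ G_Gi] X by (simp add: G_def transpose_mult)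
  have right_inv: "X * (transpose_mat X * Gi) = 1\<^sub>m a"
    using G_Gi assoc_mult_mat[OF X _ Gi, of "transpose_mat X"] X by (simp add: G_def)
  have "transpose_mat (transpose_mat X * Gi * X) = transpose_mat X * Gi * X"
    using X Gi Gi_symmetric transpose_mult[OF mult_carrier_mat[OF _ Gi] X, of "transpose_mat X"]
      transpose_mult[of "transpose_mat X" k a Gi a] by simp
  moreover have "transpose_mat X * Gi * X * (transpose_mat X * Gi) = transpose_mat X * Gi"
    using assoc_mult_mat[OF mult_carrier_mat[OF _ Gi] X mult_carrier_mat[OF _ Gi], of "transpose_mat X" k]
      right_inv right_mult_one_mat[OF mult_carrier_mat[OF _ Gi], of "transpose_mat X" k] X by simp
  ultimately show ?thesis
    using right_inv X Gi unfolding Gi_def[symmetric] by (auto simp: is_pinv_def)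
qed

lemma pinv_full_row_rank:
  assumes X: "X \<in> carrier_mat a k" and det: "det (X * transpose_mat X) \<noteq> 0"
  defines "G \<equiv> X * transpose_mat X"
  shows "pinv X = transpose_mat X * (inverse (det G) \<cdot>\<^sub>m adj_mat G)"
    and "pinv X \<in> carrier_mat k a" and "X * pinv X = 1\<^sub>m a"
proof -
  show pinv: "pinv X = transpose_mat X * (inverse (det G) \<cdot>\<^sub>m adj_mat G)"
    using pinv_eqI[OF is_pinv_full_row_rank[OF assms(1,2)]] by (simp add: G_def)
  then show "pinv X \<in> carrier_mat k a"
    using X adj_mat(1)[of G a] by (simp add: G_def)
  have "G * (inverse (det G) \<cdot>\<^sub>m adj_mat G) = 1\<^sub>m a"
    using adj_mat_inverse[of G a] X det by (simp add: G_def)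
  then show "X * pinv X = 1\<^sub>m a"
    unfolding pinv using X adj_mat(1)[of G a]
    by (simp add: G_def assoc_mult_mat[OF X _ smult_carrier_mat, of "transpose_mat X"])
qed

lemma det_gram_nonzero:
  fixes V Z :: "real mat"
  assumes V: "V \<in> carrier_mat n c" and Z: "Z \<in> carrier_mat c n" and ZV: "Z * V = 1\<^sub>m c"
  shows "det (transpose_mat V * V) \<noteq> 0"
proof
  assume "det (transpose_mat V * V) = 0"
  then obtain v where v: "v \<in> carrier_vec c" "v \<noteq> 0\<^sub>v c" "(transpose_mat V * V) *\<^sub>v v = 0\<^sub>v c"
    using det_0_iff_vec_prod_zero[of "transpose_mat V * V" c] V by auto
  have "scalar_prod (V *\<^sub>v v) (V *\<^sub>v v) = scalar_prod (transpose_mat V *\<^sub>v (V *\<^sub>v v)) v"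
    using transpose_vec_mult_scalar[OF V v(1), of "V *\<^sub>v v"] V v by simp
  also have "transpose_mat V *\<^sub>v (V *\<^sub>v v) = (transpose_mat V * V) *\<^sub>v v"
    using V v by (simp add: assoc_mult_mat_vec)
  also have "scalar_prod ((transpose_mat V * V) *\<^sub>v v) v = 0"
    using v by simp
  finally have "V *\<^sub>v v = 0\<^sub>v n"
    using conjugate_square_eq_0_vec[of "V *\<^sub>v v" n] V v by simp
  have "v = (Z * V) *\<^sub>v v"
    using ZV v by simp
  also have "\<dots> = Z *\<^sub>v (V *\<^sub>v v)"
    using Z V v by (simp add: assoc_mult_mat_vec)
  also have "\<dots> = 0\<^sub>v c"
    using \<open>V *\<^sub>v v = 0\<^sub>v n\<close> Z by (intro eq_vecI) auto
  finally show False
    using v(2) by simp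
qed

lemma pinv_left_invertible:
  fixes V Z :: "real mat"
  assumes V: "V \<in> carrier_mat n c" and Z: "Z \<in> carrier_mat c n" and ZV: "Z * V = 1\<^sub>m c"
  shows "pinv V \<in> carrier_mat c n" and "pinv V * V = 1\<^sub>m c"
proof -
  define Y where "Y = pinv (transpose_mat V)"
  have VT: "transpose_mat V \<in> carrier_mat c n"
    using V by simp
  have "det (transpose_mat V * transpose_mat (transpose_mat V)) \<noteq> 0"
    using det_gram_nonzero[OF V Z ZV] by simp
  note full_row_rank = is_pinv_full_row_rank[OF VT this] pinv_full_row_rank(3)[OF VT this]
  have "is_pinv V (transpose_mat Y)"
    using is_pinv_transpose[OF full_row_rank(1)] pinv_eqI[OF full_row_rank(1)] by (simp add: Y_def)
  then have pinv: "pinv V = transpose_mat Y" and "Y \<in> carrier_mat n c"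
    using V by (auto simp: pinv_eqI is_pinv_def)
  then show "pinv V \<in> carrier_mat c n"
    by simp
  have "pinv V * V = transpose_mat (transpose_mat V * Y)"
    using V \<open>Y \<in> carrier_mat n c\<close> by (simp add: pinv transpose_mult)
  then show "pinv V * V = 1\<^sub>m c"
    using full_row_rank(2) by (simp add: Y_def)
qed

section \<open>Rank and kernel\<close>

context vec_space
begin

lemma rank_mat_mult_le:
  assumes A: "A \<in> carrier_mat n k" and B: "B \<in> carrier_mat k nc"
  shows "rank (A * B) \<le> rank A"
proof -
  have AB: "A * B \<in> carrier_mat n nc"
    using A B by simp
  have "col (A * B) j \<in> col_space A" if "j < nc" for j
    using col_mult2[OF A B that] A B that by (auto simp: col_space_eq[OF A])
  then have cols_sub: "set (cols (A * B)) \<subseteq> col_space A"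
    using B by (auto simp: in_set_conv_nth)
  have sub_A: "subspace class_ring (col_space A) V"
    unfolding col_space_def using A cols_dim by (intro span_is_subspace) blast
  have sub_AB: "subspace class_ring (span (set (cols (A * B)))) V"
    using AB cols_dim by (intro span_is_subspace) blast
  have "span (set (cols (A * B))) \<subseteq> col_space A"
    using span_is_subset[OF cols_sub] sub_A unfolding subspace_def by blast
  then have "subspace class_ring (span (set (cols (A * B)))) (vs (col_space A))"
    by (rule nested_subspaces[OF sub_A sub_AB])
  from vectorspace.subspace_dim[OF subspace_is_vs[OF sub_A] this]
  show ?thesis
    using fin_dim_span_cols[OF A] fin_dim_span_cols[OF AB]
    unfolding rank_def col_space_def by simp
qed

lemma rank_le_nr:
  assumes A: "A \<in> carrier_mat n nc"
  shows "rank A \<le> n"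
proof -
  have "subspace class_ring (span (set (cols A))) V"
    using A cols_dim by (intro span_is_subspace) blast
  from subspace_dim[OF this fin_dim fin_dim_span_cols[OF A]]
  show ?thesis
    unfolding rank_def dim_is_n by simp
qed

lemma rank_right_invertible:
  assumes A: "A \<in> carrier_mat n k" and R: "R \<in> carrier_mat k n" and AR: "A * R = 1\<^sub>m n"
  shows "rank A = n"
  using rank_mat_mult_le[OF A R] rank_le_nr[OF A] det_rank_iff[of "1\<^sub>m n"] AR by simp

end

lemma mrank_right_invertible:
  assumes "A \<in> carrier_mat a n" and "R \<in> carrier_mat n a" and "A * R = 1\<^sub>m a"
  shows "mrank A = a"
  using vec_space.rank_right_invertible[OF assms] assms(1) by (simp add: mrank_def)

lemma append_rows_mult_block_inverse:
  fixes X Y P Q :: "'a::comm_ring_1 mat"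
  assumes X: "X \<in> carrier_mat a k" and Y: "Y \<in> carrier_mat c k"
    and P: "P \<in> carrier_mat k a" and Q: "Q \<in> carrier_mat k c"
    and "X * P = 1\<^sub>m a" "X * Q = 0\<^sub>m a c" "Y * P = 0\<^sub>m c a" "Y * Q = 1\<^sub>m c"
  shows "(X @\<^sub>r Y) * four_block_mat P Q (0\<^sub>m 0 a) (0\<^sub>m 0 c) = 1\<^sub>m (a + c)"
  unfolding append_rows_def using assms X Y
  by (subst mult_four_block_mat[OF X _ Y _ P Q]) auto

lemma kernel_projection_factorization:
  fixes CC K V :: "'a::field mat"
  assumes CC: "CC \<in> carrier_mat a n" and K: "K \<in> carrier_mat n a" and CC_K: "CC * K = 1\<^sub>m a"
    and V: "V \<in> carrier_mat n c"
    and image: "{V *\<^sub>v x | x. x \<in> carrier_vec c} = {y \<in> carrier_vec n. CC *\<^sub>v y = 0\<^sub>v a}"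
  shows "\<exists>Z \<in> carrier_mat c n. V * Z = 1\<^sub>m n - K * CC"
proof -
  define P where "P = 1\<^sub>m n - K * CC"
  have P: "P \<in> carrier_mat n n"
    unfolding P_def by (rule minus_carrier_mat[OF mult_carrier_mat[OF K CC]])
  have "CC * P = CC - (CC * K) * CC"
    using CC K mult_minus_distrib_mat[OF CC _ mult_carrier_mat[OF K CC], of "1\<^sub>m n"]
    by (simp add: P_def)
  then have CC_P: "CC * P = 0\<^sub>m a n"
    using CC_K CC by simp
  have "\<exists>x. x \<in> carrier_vec c \<and> V *\<^sub>v x = col P j" if "j < n" for j
  proof -
    have "CC *\<^sub>v col P j = col (CC * P) j"
      by (rule col_mult2[OF CC P that, symmetric])
    also have "\<dots> = 0\<^sub>v a"
      unfolding CC_P using that by (intro eq_vecI) auto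
    finally have "CC *\<^sub>v col P j = 0\<^sub>v a" .
    moreover have "col P j \<in> carrier_vec n"
      using P by (simp add: carrier_vecI)
    ultimately have "col P j \<in> {V *\<^sub>v x | x. x \<in> carrier_vec c}"
      unfolding image by blast
    then show ?thesis
      by (auto simp: eq_commute[of _ "col P j"])
  qed
  then obtain x where x: "\<And>j. j < n \<Longrightarrow> x j \<in> carrier_vec c \<and> V *\<^sub>v x j = col P j"
    by metis
  define Z where "Z = mat c n (\<lambda>(i,j). x j $ i)"
  have Z: "Z \<in> carrier_mat c n"
    by (simp add: Z_def)
  have col_Z: "col Z j = x j" if "j < n" for j
    using x[OF that] that by (auto simp: Z_def)
  have "V * Z = P"
  proof (rule eq_matI)
    fix i j assume "i < dim_row P" "j < dim_col P"
    then show "(V * Z) $$ (i,j) = P $$ (i,j)"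
      using x[of j] col_Z[of j] V Z P index_mult_mat_vec[of i V "x j"] index_col[of i P j] by simp
  qed (use V Z P in auto)
  with Z show ?thesis
    unfolding P_def by blast
qed

text \<open>The factors \<open>[K V]\<close> and \<open>[CC; Z]\<close> are square, so they commute; the lower right block of
  the product in the other order is \<open>Z * V\<close>.\<close>

lemma split_identity_left_inverse:
  fixes CC K V Z :: "'a::field mat"
  assumes CC: "CC \<in> carrier_mat a n" and K: "K \<in> carrier_mat n a"
    and V: "V \<in> carrier_mat n c" and Z: "Z \<in> carrier_mat c n" and dims: "a + c = n"
    and split: "K * CC + V * Z = 1\<^sub>m n"
  shows "Z * V = 1\<^sub>m c"
proof -
  have "four_block_mat K V (0\<^sub>m 0 a) (0\<^sub>m 0 c) * (CC @\<^sub>r Z)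
      = four_block_mat (1\<^sub>m n) (0\<^sub>m n 0) (0\<^sub>m 0 n) (1\<^sub>m 0)"
    unfolding append_rows_def using CC Z split
    by (subst mult_four_block_mat[OF K V _ _ CC _ Z]) (auto intro!: cong_four_block_mat eq_matI)
  then have WU: "four_block_mat K V (0\<^sub>m 0 a) (0\<^sub>m 0 c) * (CC @\<^sub>r Z) = 1\<^sub>m n"
    using four_block_one_mat[of n 0] by simp
  have W: "four_block_mat K V (0\<^sub>m 0 a) (0\<^sub>m 0 c) \<in> carrier_mat n n"
    using four_block_carrier_mat[OF K, of "0\<^sub>m 0 c" 0 c] dims by simp
  have U: "CC @\<^sub>r Z \<in> carrier_mat n n"
    using carrier_append_rows[OF CC Z] dims by simp
  note mat_mult_left_right_inverse[OF W U WU]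
  moreover have "(CC @\<^sub>r Z) * four_block_mat K V (0\<^sub>m 0 a) (0\<^sub>m 0 c)
      = four_block_mat (CC * K) (CC * V) (Z * K) (Z * V)"
    unfolding append_rows_def using CC K V Z
    by (subst mult_four_block_mat[OF CC _ Z _ K V]) (auto intro!: cong_four_block_mat)
  ultimately have entry: "four_block_mat (CC * K) (CC * V) (Z * K) (Z * V) $$ (a + i, a + j)
      = 1\<^sub>m n $$ (a + i, a + j)" for i j
    by simp
  show "Z * V = 1\<^sub>m c"
  proof (rule eq_matI)
    fix i j assume "i < dim_row (1\<^sub>m c)" "j < dim_col (1\<^sub>m c)"
    then show "(Z * V) $$ (i,j) = 1\<^sub>m c $$ (i,j)"
      using entry[of i j] CC K V Z dims by simp
  qed (use Z V in auto)
qed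

lemma kernel_basis_left_invertible:
  fixes CC K V :: "'a::field mat"
  assumes CC: "CC \<in> carrier_mat a n" and K: "K \<in> carrier_mat n a" and CC_K: "CC * K = 1\<^sub>m a"
    and V: "V \<in> carrier_mat n c" and dims: "a + c = n"
    and image: "{V *\<^sub>v x | x. x \<in> carrier_vec c} = {y \<in> carrier_vec n. CC *\<^sub>v y = 0\<^sub>v a}"
  shows "\<exists>Z \<in> carrier_mat c n. Z * V = 1\<^sub>m c"
proof -
  obtain Z where Z: "Z \<in> carrier_mat c n" and "V * Z = 1\<^sub>m n - K * CC"
    using kernel_projection_factorization[OF CC K CC_K V image] by blast
  then have "K * CC + V * Z = 1\<^sub>m n"
    using K CC by (auto intro!: eq_matI)
  with Z show ?thesis
    using split_identity_left_inverse[OF CC K V Z dims] by blast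
qed

lemma mult_eq_zero_if_image_in_kernel:
  fixes CC V :: "'a::comm_ring_1 mat"
  assumes CC: "CC \<in> carrier_mat a n" and V: "V \<in> carrier_mat n c"
    and kernel: "\<And>x. x \<in> carrier_vec c \<Longrightarrow> CC *\<^sub>v (V *\<^sub>v x) = 0\<^sub>v a"
  shows "CC * V = 0\<^sub>m a c"
proof (rule eq_matI)
  fix i j assume i: "i < dim_row (0\<^sub>m a c)" and j: "j < dim_col (0\<^sub>m a c)"
  have "col V j = V *\<^sub>v unit_vec c j"
    using V j by (intro eq_vecI) auto
  then have "col (CC * V) j = 0\<^sub>v a"
    using kernel[of "unit_vec c j"] col_mult2[OF CC V] j by simp
  then show "(CC * V) $$ (i,j) = 0\<^sub>m a c $$ (i,j)"
    using i j CC V index_col[of i "CC * V" j] by simp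
qed (use CC V in auto)

lemma kernel_complement_block_inverse:
  fixes CC K V :: "real mat"
  assumes CC: "CC \<in> carrier_mat a n" and K: "K \<in> carrier_mat n a" and CC_K: "CC * K = 1\<^sub>m a"
    and V: "V \<in> carrier_mat n c" and dims: "a + c = n"
    and image: "{V *\<^sub>v x | x. x \<in> carrier_vec c} = {y \<in> carrier_vec n. CC *\<^sub>v y = 0\<^sub>v a}"
  defines "N \<equiv> pinv V * (1\<^sub>m n - K * CC)"
  shows "pinv V \<in> carrier_mat c n"
    and "(CC @\<^sub>r N) * four_block_mat K V (0\<^sub>m 0 a) (0\<^sub>m 0 c) = 1\<^sub>m n"
proof -
  obtain Z where "Z \<in> carrier_mat c n" "Z * V = 1\<^sub>m c"
    using kernel_basis_left_invertible[OF CC K CC_K V dims image] by blast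
  note pinv_V = pinv_left_invertible[OF V this]
  have CC_V: "CC * V = 0\<^sub>m a c"
    using image by (intro mult_eq_zero_if_image_in_kernel[OF CC V]) blast
  have KCC: "K * CC \<in> carrier_mat n n"
    using K CC by simp
  have P: "1\<^sub>m n - K * CC \<in> carrier_mat n n"
    by (rule minus_carrier_mat[OF KCC])
  show "pinv V \<in> carrier_mat c n"
    by (rule pinv_V(1))
  then have N: "N \<in> carrier_mat c n"
    unfolding N_def using P by simp
  have "(1\<^sub>m n - K * CC) * K = K - K * (CC * K)"
    using minus_mult_distrib_mat[OF _ KCC K] K CC by simp
  then have "N * K = 0\<^sub>m c a"
    unfolding N_def using CC_K K pinv_V(1) P by simp
  moreover have "(1\<^sub>m n - K * CC) * V = V"
    using minus_mult_distrib_mat[OF _ KCC V] V K CC CC_V by (auto intro!: eq_matI)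
  then have "N * V = 1\<^sub>m c"
    unfolding N_def using CC_V pinv_V V P K by simp
  ultimately show "(CC @\<^sub>r N) * four_block_mat K V (0\<^sub>m 0 a) (0\<^sub>m 0 c) = 1\<^sub>m n"
    using append_rows_mult_block_inverse[OF CC N K V CC_K _ ] CC_V dims by simp
qed

section \<open>The transformation \<open>U\<close>\<close>

lemma bounded_C1_mat_pinv:
  assumes X: "bounded_C1_mat a k X" and det: "\<And>t. \<alpha> \<le> det (X t * transpose_mat (X t))" and "0 < \<alpha>"
  shows "bounded_C1_mat k a (\<lambda>t. pinv (X t))"
proof -
  define G where "G t = X t * transpose_mat (X t)" for t
  have G: "bounded_C1_mat a a G"
    unfolding G_def using X by (intro bounded_C1_mat_mult bounded_C1_mat_transpose)
  have "det (X t * transpose_mat (X t)) \<noteq> 0" for t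
    using det[of t] \<open>0 < \<alpha>\<close> by linarith
  then have pinv: "pinv (X t) = transpose_mat (X t) * (inverse (det (G t)) \<cdot>\<^sub>m adj_mat (G t))" for t
    unfolding G_def by (intro pinv_full_row_rank(1)[OF bounded_C1_matD(1)[OF X]])
  have "\<alpha> \<le> det (G t)" for t
    using det by (simp add: G_def)
  then have "bounded_C1_mat a a (\<lambda>t. inverse (det (G t)) \<cdot>\<^sub>m adj_mat (G t))"
    by (rule bounded_C1_mat_adj_inverse[OF G _ \<open>0 < \<alpha>\<close>])
  then show ?thesis
    unfolding pinv by (rule bounded_C1_mat_mult[OF bounded_C1_mat_transpose[OF X]])
qed

lemma bounded_C1_mat_four_block:
  assumes MA: "bounded_C1_mat a b MA" and MB: "bounded_C1_mat a d MB"
    and MC: "bounded_C1_mat c b MC" and MD: "bounded_C1_mat c d MD"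
  shows "bounded_C1_mat (a + c) (b + d) (\<lambda>t. four_block_mat (MA t) (MB t) (MC t) (MD t))"
proof (rule bounded_C1_matI)
  fix i j assume ij: "i < a + c" "j < b + d"
  have entry: "four_block_mat (MA t) (MB t) (MC t) (MD t) $$ (i,j) =
      (if i < a then if j < b then MA t $$ (i,j) else MB t $$ (i, j - b)
       else if j < b then MC t $$ (i - a, j) else MD t $$ (i - a, j - b))" for t
    using ij by (simp add: bounded_C1_matD[OF MA] bounded_C1_matD[OF MD])
  show "bounded_C1 (\<lambda>t. four_block_mat (MA t) (MB t) (MC t) (MD t) $$ (i,j))"
    unfolding entry using ij
    by (cases "i < a"; cases "j < b")
      (simp_all add: bounded_C1_matD(4)[OF MA] bounded_C1_matD(4)[OF MB]
        bounded_C1_matD(4)[OF MC] bounded_C1_matD(4)[OF MD])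
qed (simp_all add: bounded_C1_matD[OF MA] bounded_C1_matD[OF MD])

lemma calU_eq_append_rows:
  assumes "CC \<in> carrier_mat a n" and "mrank CC = a"
    and "calN n V CC BB t \<in> carrier_mat (n - a) n"
  shows "calU n V CC BB t = CC @\<^sub>r calN n V CC BB t"
  using assms by (auto simp: calU_def append_rows_def intro!: eq_matI)

lemma lyapunov_transformation_kernel_complement:
  fixes CC V :: "real mat" and K :: "real \<Rightarrow> real mat"
  assumes CC: "CC \<in> carrier_mat a n" and K: "bounded_C1_mat n a K" and CC_K: "\<And>t. CC * K t = 1\<^sub>m a"
    and V: "V \<in> carrier_mat n c" and dims: "a + c = n"
    and image: "{V *\<^sub>v x | x. x \<in> carrier_vec c} = {y \<in> carrier_vec n. CC *\<^sub>v y = 0\<^sub>v a}"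
  shows "lyapunov_transformation n (\<lambda>t. CC @\<^sub>r (pinv V * (1\<^sub>m n - K t * CC)))"
proof -
  define N where "N t = pinv V * (1\<^sub>m n - K t * CC)" for t
  note block_inverse = kernel_complement_block_inverse[OF CC bounded_C1_matD(1)[OF K] CC_K V dims image,
      folded N_def]
  have N: "bounded_C1_mat c n N"
    unfolding N_def
    by (intro bounded_C1_mat_mult[OF bounded_C1_mat_const[OF block_inverse(1)]] bounded_C1_mat_diff
        bounded_C1_mat_mult[OF K bounded_C1_mat_const[OF CC]] bounded_C1_mat_const one_carrier_mat)
  have "CC @\<^sub>r N t = four_block_mat CC (0\<^sub>m a 0) (N t) (0\<^sub>m c 0)" for t
    using CC bounded_C1_matD(2)[OF N] by (simp add: append_rows_def)
  moreover have "bounded_C1_mat (a + c) (n + 0) (\<lambda>t. four_block_mat CC (0\<^sub>m a 0) (N t) (0\<^sub>m c 0))"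
    using CC N by (intro bounded_C1_mat_four_block bounded_C1_mat_const) auto
  moreover have "bounded_C1_mat (n + 0) (a + c) (\<lambda>t. four_block_mat (K t) V (0\<^sub>m 0 a) (0\<^sub>m 0 c))"
    using K V by (intro bounded_C1_mat_four_block bounded_C1_mat_const) auto
  ultimately show ?thesis
    using block_inverse(2) dims lyapunov_transformationI
    unfolding N_def[symmetric] by simp
qed

lemma det_cond_right_inverse:
  assumes data: "data_hyps n m p A B C f L r" and det_bound: "det_cond n m p A B C L r"
  defines "CC \<equiv> calC n p A C r" and "BB \<equiv> calB n m A B L r"
  defines "K \<equiv> \<lambda>t. BB t * pinv (CC * BB t)"
  shows "\<And>t. CC * K t = 1\<^sub>m (r * p)" and "mrank CC = r * p" and "r * p \<le> n"
    and "bounded_C1_mat n (r * p) K"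
proof -
  define a where "a = r * p"
  have CC: "CC \<in> carrier_mat a n" and BB: "BB t \<in> carrier_mat n (r * m)" for t
    by (simp_all add: CC_def BB_def a_def calC_def calB_def)
  obtain \<alpha> where "0 < \<alpha>" and det_CB: "\<And>t. \<alpha> \<le> det (CC * BB t * transpose_mat (CC * BB t))"
    using det_bound by (auto simp: det_cond_def CC_def BB_def)
  then have "det (CC * BB t * transpose_mat (CC * BB t)) \<noteq> 0" for t
    by (metis less_le_trans order_less_irrefl)
  note pinv_CB = pinv_full_row_rank(2,3)[OF mult_carrier_mat[OF CC BB] this]
  have K: "K t \<in> carrier_mat n a" and CC_K: "CC * K t = 1\<^sub>m a" for t
    using pinv_CB[of t] BB[of t] CC by (simp_all add: K_def)
  then show "CC * K t = 1\<^sub>m (r * p)" for t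
    by (simp add: a_def)
  have rank: "mrank CC = a"
    using mrank_right_invertible[OF CC K CC_K] .
  then show "mrank CC = r * p"
    by (simp add: a_def)
  from rank have "a \<le> n"
    using vec_space.rank_le_nc[OF CC] CC by (simp add: mrank_def)
  then show "r * p \<le> n"
    by (simp add: a_def)
  \<comment> \<open>If \<open>r * p = 0\<close> then \<open>K\<close> has no columns and \<open>r\<close> may exceed \<open>n\<close>;
    otherwise \<open>r \<le> r * p \<le> n\<close>.\<close>
  show "bounded_C1_mat n (r * p) K"
  proof (cases "a = 0")
    case True
    then show ?thesis
      using K bounded_C1_mat_no_cols[of K n] by (simp add: a_def[symmetric])
  next
    case False
    then have "r \<le> n"
      using \<open>a \<le> n\<close> unfolding a_def by (cases p) simp_all
    then have BB_C1: "bounded_C1_mat n (r * m) BB"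
      unfolding BB_def using data by (intro calB_bounded_C1) (auto simp: data_hyps_def)
    then have "bounded_C1_mat a (r * m) (\<lambda>t. CC * BB t)"
      by (rule bounded_C1_mat_mult[OF bounded_C1_mat_const[OF CC]])
    then have "bounded_C1_mat (r * m) a (\<lambda>t. pinv (CC * BB t))"
      using det_CB \<open>0 < \<alpha>\<close> by (rule bounded_C1_mat_pinv)
    then show ?thesis
      unfolding K_def a_def by (rule bounded_C1_mat_mult[OF BB_C1])
  qed
qed

theorem calU_lyapunov_transformation:
  assumes data: "data_hyps n m p A B C f L r" and kernel: "kernel_basis n (calC n p A C r) V"
    and det_bound: "det_cond n m p A B C L r"
  shows "lyapunov_transformation n (calU n V (calC n p A C r) (calB n m A B L r))"
proof -
  define CC BB a c where "CC = calC n p A C r" and "BB = calB n m A B L r" and "a = r * p"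
    and "c = n - r * p"
  define K where "K t = BB t * pinv (CC * BB t)" for t
  note right_inverse = det_cond_right_inverse[OF data det_bound, folded CC_def BB_def K_def a_def]
  have CC: "CC \<in> carrier_mat a n"
    by (simp add: CC_def a_def calC_def)
  have dims: "a + c = n"
    using right_inverse(3) by (simp add: a_def c_def)
  have V: "V \<in> carrier_mat n c"
    and image: "{V *\<^sub>v x | x. x \<in> carrier_vec c} = {y \<in> carrier_vec n. CC *\<^sub>v y = 0\<^sub>v a}"
    using kernel CC right_inverse(2) unfolding kernel_basis_def CC_def[symmetric] by (auto simp: a_def c_def)
  have pinv_V: "pinv V \<in> carrier_mat c n"
    using kernel_complement_block_inverse(1)[OF CC bounded_C1_matD(1)[OF right_inverse(4)]
        right_inverse(1) V dims image] .
  have "pinv V * (1\<^sub>m n - K t * CC) \<in> carrier_mat c n" for t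
    using mult_carrier_mat[OF pinv_V minus_carrier_mat[OF
          mult_carrier_mat[OF bounded_C1_matD(1)[OF right_inverse(4)] CC]]] .
  then have "calU n V CC BB = (\<lambda>t. CC @\<^sub>r (pinv V * (1\<^sub>m n - K t * CC)))"
    using calU_eq_append_rows[OF CC right_inverse(2)] by (auto simp: calN_def K_def c_def a_def)
  then show ?thesis
    using lyapunov_transformation_kernel_complement[OF CC right_inverse(4,1) V dims image]
    by (simp add: CC_def BB_def)
qed

section \<open>A counterexample to the converse\<close>

definition inv_one_plus_exp :: "real \<Rightarrow> real" where
  "inv_one_plus_exp t = 1 / (1 + exp t)"

lemma inv_one_plus_exp_bounds: "0 < inv_one_plus_exp t" "inv_one_plus_exp t < 1"
  unfolding inv_one_plus_exp_def by (simp_all add: add_pos_pos)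

lemma inv_one_plus_exp_has_derivative:
  "(inv_one_plus_exp has_real_derivative inv_one_plus_exp t ^ 2 - inv_one_plus_exp t) (at t)"
proof -
  have "1 + exp t \<noteq> 0"
    using exp_gt_zero[of t] by linarith
  have "(1 / q) ^ 2 - 1 / q = - (q - 1) / q ^ 2" if "q \<noteq> 0" for q :: real
    using that by (simp add: field_simps power2_eq_square)
  from this[OF \<open>1 + exp t \<noteq> 0\<close>]
  have "inv_one_plus_exp t ^ 2 - inv_one_plus_exp t = - exp t / (1 + exp t) ^ 2"
    by (simp add: inv_one_plus_exp_def)
  moreover have "(inv_one_plus_exp has_real_derivative - exp t / (1 + exp t) ^ 2) (at t)"
    unfolding inv_one_plus_exp_def[abs_def] using \<open>1 + exp t \<noteq> 0\<close>
    by (auto intro!: derivative_eq_intros simp: power2_eq_square)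
  ultimately show ?thesis
    by simp
qed

lemma deriv_inv_one_plus_exp: "deriv inv_one_plus_exp t = inv_one_plus_exp t ^ 2 - inv_one_plus_exp t"
  by (rule DERIV_imp_deriv[OF inv_one_plus_exp_has_derivative])

lemma higher_deriv_inv_one_plus_exp: "\<exists>P. (deriv ^^ k) inv_one_plus_exp = (\<lambda>t. poly P (inv_one_plus_exp t))"
proof (induction k)
  case 0
  show ?case
    by (rule exI[of _ "[:0, 1:]"]) auto
next
  case (Suc k)
  then obtain P where P: "(deriv ^^ k) inv_one_plus_exp = (\<lambda>t. poly P (inv_one_plus_exp t))"
    by blast
  have "((\<lambda>t. poly P (inv_one_plus_exp t)) has_real_derivative
      poly (pderiv P * [:0, -1, 1:]) (inv_one_plus_exp t)) (at t)" for t
    using DERIV_chain2[OF poly_DERIV inv_one_plus_exp_has_derivative]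
    by (simp add: algebra_simps power2_eq_square)
  then have "deriv (\<lambda>t. poly P (inv_one_plus_exp t)) = (\<lambda>t. poly (pderiv P * [:0, -1, 1:]) (inv_one_plus_exp t))"
    by (intro ext DERIV_imp_deriv)
  then have "(deriv ^^ Suc k) inv_one_plus_exp = (\<lambda>t. poly (pderiv P * [:0, -1, 1:]) (inv_one_plus_exp t))"
    using P by simp
  then show ?case
    by blast
qed

lemma inv_one_plus_exp_differentiable: "(deriv ^^ k) inv_one_plus_exp differentiable (at t)"
proof -
  obtain P where "(deriv ^^ k) inv_one_plus_exp = (\<lambda>t. poly P (inv_one_plus_exp t))"
    using higher_deriv_inv_one_plus_exp by blast
  then show ?thesis
    using DERIV_chain2[OF poly_DERIV inv_one_plus_exp_has_derivative]
    by (auto simp: real_differentiable_def)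
qed

lemma inv_one_plus_exp_low_derivs_bounded:
  assumes "k \<le> 1"
  shows "\<bar>(deriv ^^ k) inv_one_plus_exp t\<bar> \<le> 1"
proof -
  have "0 \<le> inv_one_plus_exp t * inv_one_plus_exp t"
    and "inv_one_plus_exp t * inv_one_plus_exp t \<le> inv_one_plus_exp t"
    using inv_one_plus_exp_bounds[of t] by (simp_all add: mult_left_le_one_le)
  then have "\<bar>inv_one_plus_exp t ^ 2 - inv_one_plus_exp t\<bar> \<le> 1"
    unfolding power2_eq_square abs_le_iff using inv_one_plus_exp_bounds[of t] by linarith
  moreover have "\<bar>inv_one_plus_exp t\<bar> \<le> 1"
    using inv_one_plus_exp_bounds[of t] by simp
  ultimately show ?thesis
    using assms by (auto simp: le_Suc_eq deriv_inv_one_plus_exp)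
qed

lemma inv_one_plus_exp_square_small: "0 < \<epsilon> \<Longrightarrow> \<exists>t. inv_one_plus_exp t ^ 2 < \<epsilon>"
proof -
  assume "0 < \<epsilon>"
  define t where "t = 1 - ln \<epsilon>"
  have "inv_one_plus_exp t < 1 / exp t"
    unfolding inv_one_plus_exp_def by (rule divide_strict_left_mono) (simp_all add: add_pos_pos)
  also have "\<dots> = \<epsilon> * exp (-1)"
    using \<open>0 < \<epsilon>\<close> by (simp add: t_def exp_diff exp_minus field_simps)
  also have "\<dots> < \<epsilon>"
    using \<open>0 < \<epsilon>\<close> by simp
  finally have "inv_one_plus_exp t < \<epsilon>" .
  moreover have "inv_one_plus_exp t ^ 2 < inv_one_plus_exp t"
    using inv_one_plus_exp_bounds[of t] by (simp add: power2_eq_square)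
  ultimately show ?thesis
    by (meson less_trans)
qed

lemma lyapunov_transformation_one: "lyapunov_transformation n (\<lambda>t. 1\<^sub>m n)"
  by (rule lyapunov_transformationI[of _ _ "\<lambda>t. 1\<^sub>m n"]) (auto intro: bounded_C1_mat_const)

definition example_L :: "real \<Rightarrow> real mat" where
  "example_L t = mat 1 1 (\<lambda>_. inv_one_plus_exp t)"

lemma example_L_carrier: "example_L t \<in> carrier_mat 1 1"
  by (simp add: example_L_def)

lemma example_data_hyps:
  "data_hyps 1 1 1 (0\<^sub>m 1 1) (1\<^sub>m 1) (1\<^sub>m 1) (\<lambda>t x u. 0\<^sub>v 1) example_L 1"
proof -
  have rank: "mrank (example_L t) = 1" for t
    using inv_one_plus_exp_bounds[of t]
    by (intro mrank_right_invertible[OF example_L_carrier, of "mat 1 1 (\<lambda>_. 1 / inv_one_plus_exp t)"])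
      (auto simp: example_L_def scalar_prod_def intro!: eq_matI)
  have entry: "(\<lambda>s. example_L s $$ (i,j)) = inv_one_plus_exp" if "i < 1" "j < 1" for i j
    using that by (auto simp: example_L_def)
  have "bounded_mat_fun (mderiv_n k example_L)" if "k \<le> 1" for k
    using that entry inv_one_plus_exp_low_derivs_bounded unfolding bounded_mat_fun_def mderiv_n_def
    by (intro exI[of _ 1]) (auto simp: example_L_def)
  moreover have "smooth_mat_fun 1 1 example_L"
    unfolding smooth_mat_fun_def
  proof (intro conjI allI impI)
    show "example_L t \<in> carrier_mat 1 1" for t
      by (rule example_L_carrier)
    show "(deriv ^^ k) (\<lambda>s. example_L s $$ (i,j)) differentiable (at t)" if "i < 1" "j < 1" for k i j t
      using entry[OF that] inv_one_plus_exp_differentiable by simp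
  qed
  moreover have "cont_bounded_rhs 1 1 (\<lambda>t x u. 0\<^sub>v 1)"
    unfolding cont_bounded_rhs_def vdist1_def by (auto intro: exI[of _ 1])
  moreover have "1\<^sub>m 1 * example_L t = example_L t" for t
    using example_L_carrier[of t] by simp
  ultimately show ?thesis
    using rank example_L_carrier
    by (auto simp: data_hyps_def P1_def P2_def)
qed

lemma mrank_one: "mrank (1\<^sub>m n) = n"
  by (rule mrank_right_invertible[of _ n n "1\<^sub>m n"]) auto

lemma example_calC: "calC 1 1 (0\<^sub>m 1 1) (1\<^sub>m 1) 1 = 1\<^sub>m 1"
  by (auto simp: calC_def intro!: eq_matI)

lemma example_kernel_basis: "kernel_basis 1 (calC 1 1 (0\<^sub>m 1 1) (1\<^sub>m 1) 1) (0\<^sub>m 1 0)"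
proof -
  have "{0\<^sub>m 1 0 *\<^sub>v x | x. x \<in> carrier_vec 0} = {0\<^sub>v 1 :: real vec}"
    by (auto simp: scalar_prod_def intro!: exI[of _ "0\<^sub>v 0"] eq_vecI)
  then show ?thesis
    unfolding kernel_basis_def example_calC mrank_one by auto
qed

lemma example_calU_lyapunov_transformation:
  "lyapunov_transformation 1 (calU 1 (0\<^sub>m 1 0) (calC 1 1 (0\<^sub>m 1 1) (1\<^sub>m 1) 1) BB)"
proof -
  have "calU 1 (0\<^sub>m 1 0) (1\<^sub>m 1) BB = (\<lambda>t. 1\<^sub>m 1)"
    unfolding calU_def mrank_one by (auto intro!: eq_matI)
  then show ?thesis
    unfolding example_calC by (simp add: lyapunov_transformation_one)
qed

lemma example_calC_mult_calB:
  "calC 1 1 (0\<^sub>m 1 1) (1\<^sub>m 1) 1 * calB 1 1 (0\<^sub>m 1 1) (1\<^sub>m 1) example_L 1 t = example_L t"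
  using example_L_carrier[of t] by (auto simp: calC_def calB_def scalar_prod_def intro!: eq_matI)

lemma example_not_det_cond: "\<not> det_cond 1 1 1 (0\<^sub>m 1 1) (1\<^sub>m 1) (1\<^sub>m 1) example_L 1"
proof
  assume "det_cond 1 1 1 (0\<^sub>m 1 1) (1\<^sub>m 1) (1\<^sub>m 1) example_L 1"
  then obtain \<alpha> where "0 < \<alpha>" and bound: "\<And>t. \<alpha> \<le> det (example_L t * transpose_mat (example_L t))"
    unfolding det_cond_def example_calC_mult_calB by blast
  obtain t where small: "inv_one_plus_exp t ^ 2 < \<alpha>"
    using inv_one_plus_exp_square_small[OF \<open>0 < \<alpha>\<close>] by blast
  have "det (example_L t * transpose_mat (example_L t)) = (example_L t * transpose_mat (example_L t)) $$ (0, 0)"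
    using example_L_carrier[of t] by (simp add: det_single)
  also have "\<dots> = inv_one_plus_exp t ^ 2"
    by (simp add: example_L_def scalar_prod_def power2_eq_square)
  finally show False
    using bound[of t] small by simp
qed

theorem lemma2:
  shows "(\<forall>n m p A B C f L r V.
            data_hyps n m p A B C f L r \<longrightarrow>
            kernel_basis n (calC n p A C r) V \<longrightarrow>
            det_cond n m p A B C L r \<longrightarrow>
            lyapunov_transformation n (calU n V (calC n p A C r) (calB n m A B L r)))
       \<and> (\<exists>n m p A B C f L r V.
            data_hyps n m p A B C f L r \<and>
            kernel_basis n (calC n p A C r) V \<and>
            lyapunov_transformation n (calU n V (calC n p A C r) (calB n m A B L r)) \<and>
            \<not> det_cond n m p A B C L r)"
proof (intro conjI allI impI)
  fix n m p A B C f L r V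
  assume "data_hyps n m p A B C f L r" and "kernel_basis n (calC n p A C r) V"
    and "det_cond n m p A B C L r"
  then show "lyapunov_transformation n (calU n V (calC n p A C r) (calB n m A B L r))"
    by (rule calU_lyapunov_transformation)
qed (rule exI conjI example_data_hyps example_kernel_basis example_calU_lyapunov_transformation
    example_not_det_cond)+

end
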